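(* Let $G$ be a connected bipartite graph with $G\not\cong K_2$. Then $\chi'_{2}(\overleftrightarrow{G}) = \chi'_{1,2}(\overleftrightarrow{G})$.
   Context: For a simple graph $G$, the symmetric digraph $\overleftrightarrow{G}$ is obtained by replacing each edge $uv$ of $G$ by the pair of opposite arcs $\overrightarrow{uv}$ and $\overrightarrow{vu}$. A monochromatic 2-path is a pair of arcs $\overrightarrow{uv},\overrightarrow{vw}$ with $w\neq u$ of the same colour; a monochromatic 2-cycle is a pair $\overrightarrow{uv},\overrightarrow{vu}$ of the same colour. $\chi'_{1,2}(\overleftrightarrow{G})$ is the least number of colours in an arc-colouring of $\overleftrightarrow{G}$ with no monochromatic 2-cycles and no monochromatic 2-paths; $\chi'_{2}(\overleftrightarrow{G})$ is the least number of colours in an arc-colouring of $\overleftrightarrow{G}$ with no monochromatic 2-paths (monochromatic 2-cycles allowed). *)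

theory Defs
  imports Main
begin

definition simple_graph :: "'a set \<Rightarrow> ('a \<Rightarrow> 'a \<Rightarrow> bool) \<Rightarrow> bool" where
  "simple_graph V E \<longleftrightarrow> finite V \<and>
     (\<forall>u v. E u v \<longrightarrow> u \<in> V \<and> v \<in> V \<and> u \<noteq> v \<and> E v u)"

definition connected_graph :: "'a set \<Rightarrow> ('a \<Rightarrow> 'a \<Rightarrow> bool) \<Rightarrow> bool" where
  "connected_graph V E \<longleftrightarrow> V \<noteq> {} \<and>
     (\<forall>u\<in>V. \<forall>v\<in>V. (u, v) \<in> {(x, y). E x y}\<^sup>*)"

definition bipartite_graph :: "'a set \<Rightarrow> ('a \<Rightarrow> 'a \<Rightarrow> bool) \<Rightarrow> bool" where
  "bipartite_graph V E \<longleftrightarrow> (\<exists>A B. A \<union> B = V \<and> A \<inter> B = {} \<and>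
     (\<forall>u v. E u v \<longrightarrow> (u \<in> A \<and> v \<in> B) \<or> (u \<in> B \<and> v \<in> A)))"

definition is_K2 :: "'a set \<Rightarrow> ('a \<Rightarrow> 'a \<Rightarrow> bool) \<Rightarrow> bool" where
  "is_K2 V E \<longleftrightarrow> (\<exists>u v. u \<noteq> v \<and> V = {u, v} \<and> E u v)"

text \<open>Arcs of the symmetric digraph: each edge uv gives arcs (u,v) and (v,u).\<close>
definition sym_arcs :: "('a \<Rightarrow> 'a \<Rightarrow> bool) \<Rightarrow> ('a \<times> 'a) set" where
  "sym_arcs E = {(u, v). E u v}"

definition no_mono_2path :: "('a \<Rightarrow> 'a \<Rightarrow> bool) \<Rightarrow> ('a \<times> 'a \<Rightarrow> nat) \<Rightarrow> bool" where
  "no_mono_2path E c \<longleftrightarrow>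
     (\<forall>u v w. E u v \<and> E v w \<and> w \<noteq> u \<longrightarrow> c (u, v) \<noteq> c (v, w))"

definition no_mono_2cycle :: "('a \<Rightarrow> 'a \<Rightarrow> bool) \<Rightarrow> ('a \<times> 'a \<Rightarrow> nat) \<Rightarrow> bool" where
  "no_mono_2cycle E c \<longleftrightarrow> (\<forall>u v. E u v \<longrightarrow> c (u, v) \<noteq> c (v, u))"

definition arc_colouring :: "('a \<Rightarrow> 'a \<Rightarrow> bool) \<Rightarrow> nat \<Rightarrow> ('a \<times> 'a \<Rightarrow> nat) \<Rightarrow> bool" where
  "arc_colouring E k c \<longleftrightarrow> (\<forall>a\<in>sym_arcs E. c a < k)"

definition chi2 :: "('a \<Rightarrow> 'a \<Rightarrow> bool) \<Rightarrow> nat" where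
  "chi2 E = (LEAST k. \<exists>c. arc_colouring E k c \<and> no_mono_2path E c)"

definition chi12 :: "('a \<Rightarrow> 'a \<Rightarrow> bool) \<Rightarrow> nat" where
  "chi12 E = (LEAST k. \<exists>c. arc_colouring E k c \<and> no_mono_2path E c \<and> no_mono_2cycle E c)"

end

theory Submission
  imports Defs
begin

text \<open>Colour each arc by the side of the bipartition containing its tail. Consecutive arcs
  \<open>(u, v), (v, w)\<close> and opposite arcs \<open>(u, v), (v, u)\<close> have tails on different sides,
  so two colours already avoid monochromatic 2-paths and 2-cycles. Conversely, two colours are
  needed as soon as there is a 2-path, and a connected graph other than \<open>K\<^sub>2\<close> with at
  least one edge has one. Edgeless graphs need no colours at all.\<close>

lemma bipartite_tail_side_colouring:
  assumes "bipartite_graph V E"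
  obtains c where "arc_colouring E 2 c" "no_mono_2path E c" "no_mono_2cycle E c"
proof -
  obtain A B where AB: "A \<union> B = V" "A \<inter> B = {}"
    "\<forall>u v. E u v \<longrightarrow> (u \<in> A \<and> v \<in> B) \<or> (u \<in> B \<and> v \<in> A)"
    using assms unfolding bipartite_graph_def by blast
  define c :: "'a \<times> 'a \<Rightarrow> nat" where "c = (\<lambda>(u, v). if u \<in> A then 0 else 1)"
  have "arc_colouring E 2 c" unfolding arc_colouring_def c_def by auto
  moreover have "no_mono_2path E c" unfolding no_mono_2path_def c_def using AB by auto
  moreover have "no_mono_2cycle E c" unfolding no_mono_2cycle_def c_def using AB by auto
  ultimately show ?thesis by (rule that)
qed

lemma two_colours_needed_for_2path:
  assumes "E x y" "E y z" "z \<noteq> x"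
    and "arc_colouring E k c" "no_mono_2path E c"
  shows "2 \<le> k"
proof -
  have "c (x, y) < k" "c (y, z) < k"
    using assms(1,2,4) unfolding arc_colouring_def sym_arcs_def by auto
  moreover have "c (x, y) \<noteq> c (y, z)"
    using assms(1-3,5) unfolding no_mono_2path_def by blast
  ultimately show ?thesis by linarith
qed

lemma chi2_eq_2:
  assumes "E x y" "E y z" "z \<noteq> x"
    and "arc_colouring E 2 c" "no_mono_2path E c"
  shows "chi2 E = 2"
  unfolding chi2_def
proof (rule Least_equality)
  show "\<exists>c. arc_colouring E 2 c \<and> no_mono_2path E c" using assms(4,5) by blast
next
  fix k assume "\<exists>d. arc_colouring E k d \<and> no_mono_2path E d"
  then show "2 \<le> k" using two_colours_needed_for_2path[OF assms(1-3)] by blast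
qed

lemma chi12_eq_2:
  assumes "E x y" "E y z" "z \<noteq> x"
    and "arc_colouring E 2 c" "no_mono_2path E c" "no_mono_2cycle E c"
  shows "chi12 E = 2"
  unfolding chi12_def
proof (rule Least_equality)
  show "\<exists>c. arc_colouring E 2 c \<and> no_mono_2path E c \<and> no_mono_2cycle E c"
    using assms(4-6) by blast
next
  fix k assume "\<exists>d. arc_colouring E k d \<and> no_mono_2path E d \<and> no_mono_2cycle E d"
  then show "2 \<le> k" using two_colours_needed_for_2path[OF assms(1-3)] by blast
qed

lemma chi2_eq_0_if_edgeless:
  assumes "\<And>u v. \<not> E u v"
  shows "chi2 E = 0"
  unfolding chi2_def
  by (rule Least_eq_0) (use assms in \<open>auto simp: arc_colouring_def sym_arcs_def no_mono_2path_def\<close>)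

lemma chi12_eq_0_if_edgeless:
  assumes "\<And>u v. \<not> E u v"
  shows "chi12 E = 0"
  unfolding chi12_def
  by (rule Least_eq_0)
    (use assms in \<open>auto simp: arc_colouring_def sym_arcs_def no_mono_2path_def no_mono_2cycle_def\<close>)

lemma connected_not_K2_has_2path:
  assumes "simple_graph V E" "connected_graph V E" "\<not> is_K2 V E" "E u v"
  obtains x y z where "E x y" "E y z" "z \<noteq> x"
proof (rule ccontr)
  assume no_2path: "\<not> thesis"
  have uv: "u \<in> V" "v \<in> V" "u \<noteq> v" "E v u"
    using assms(1,4) unfolding simple_graph_def by auto
  have "V \<noteq> {u, v}" using assms(3,4) uv(3) unfolding is_K2_def by blast
  then obtain w where w: "w \<in> V" "w \<notin> {u, v}" using uv by blast
  have "(u, w) \<in> {(x, y). E x y}\<^sup>*"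
    using assms(2) uv w unfolding connected_graph_def by blast
  then have "w \<in> {u, v}"
  proof (induction rule: rtrancl_induct)
    case base
    then show ?case by simp
  next
    case (step y z)
    then show ?case using no_2path that assms(4) uv(4) by blast
  qed
  with w show False by blast
qed

theorem mainTheorem5:
  fixes V :: "'a set" and E :: "'a \<Rightarrow> 'a \<Rightarrow> bool"
  assumes "simple_graph V E"
    and "connected_graph V E"
    and "bipartite_graph V E"
    and "\<not> is_K2 V E"
  shows "chi2 E = chi12 E"
proof (cases "\<exists>u v. E u v")
  case False
  then show ?thesis using chi2_eq_0_if_edgeless chi12_eq_0_if_edgeless by metis
next
  case True
  then obtain u v where "E u v" by blast
  with assms(1,2,4) obtain x y z where path: "E x y" "E y z" "z \<noteq> x"
    by (rule connected_not_K2_has_2path)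
  obtain c where "arc_colouring E 2 c" "no_mono_2path E c" "no_mono_2cycle E c"
    using assms(3) by (rule bipartite_tail_side_colouring)
  with path show ?thesis by (simp add: chi2_eq_2 chi12_eq_2)
qed

end
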